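(* Let $I\subseteq\mathbb{R}_+$ be a nonempty, non-singleton interval, let $n\in\mathbb{N}$, and let $\Phi: I\to\mathbb{R}_+$ be subadditive of order $n$. Then for all $x,y\in I$ with $x+y\in I$, $$\Phi(x+y)\leq \max\{\Phi(x)+(2^n-1)\Phi(y),\ (2^n-1)\Phi(x)+\Phi(y)\}.$$
   Context: $\mathbb{R}_+$ denotes the set of nonnegative real numbers. For $n\in\mathbb{N}$, a function $\Phi: I\to\mathbb{R}_+$ is called subadditive of order $n$ if for all $x,y\in I$ with $y>0$ and $x+y\in I$ one has $\Phi(x+y)\leq \Phi(x)+\frac{(x+y)^n-x^n}{y^n}\Phi(y)$. *)

theory Defs
  imports "HOL-Analysis.Analysis"
begin

definition subadditive_order :: "nat \<Rightarrow> real set \<Rightarrow> (real \<Rightarrow> real) \<Rightarrow> bool" where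
  "subadditive_order n I \<Phi> \<longleftrightarrow>
     (\<forall>x\<in>I. \<forall>y\<in>I. y > 0 \<longrightarrow> x + y \<in> I \<longrightarrow>
        \<Phi> (x + y) \<le> \<Phi> x + ((x + y) ^ n - x ^ n) / y ^ n * \<Phi> y)"

end

theory Submission
  imports Defs
begin

text \<open>For \<open>0 \<le> x \<le> y\<close> the coefficient \<open>((x + y)^n - x^n) / y^n\<close> of \<open>\<Phi> y\<close> in the
  defining inequality is at most its value \<open>2^n - 1\<close> at \<open>x = y\<close>; applying the definition
  with the larger argument in the role of \<open>y\<close> gives the bound.\<close>

lemma power_add_diff_le:
  fixes a b :: "'a :: linordered_idom"
  assumes "0 \<le> a" "a \<le> b"
  shows "(a + b) ^ n - a ^ n \<le> (2 ^ n - 1) * b ^ n"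
proof (induction n)
  case 0
  then show ?case by simp
next
  case (Suc n)
  have "0 \<le> b" using assms by linarith
  have "(a + b) ^ Suc n - a ^ Suc n = (a + b) * ((a + b) ^ n - a ^ n) + b * a ^ n"
    by (simp add: algebra_simps)
  also have "\<dots> \<le> (2 * b) * ((2 ^ n - 1) * b ^ n) + b * b ^ n"
  proof (rule add_mono)
    have "a ^ n \<le> (a + b) ^ n" using assms \<open>0 \<le> b\<close> by (simp add: power_mono)
    then show "(a + b) * ((a + b) ^ n - a ^ n) \<le> (2 * b) * ((2 ^ n - 1) * b ^ n)"
      using Suc.IH assms by (intro mult_mono) auto
    show "b * a ^ n \<le> b * b ^ n"
      using assms \<open>0 \<le> b\<close> by (simp add: mult_left_mono power_mono)
  qed
  also have "\<dots> = (2 ^ Suc n - 1) * b ^ Suc n" by (simp add: algebra_simps)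
  finally show ?case .
qed

lemma subadditive_order_le_larger:
  assumes "subadditive_order n I \<Phi>"
    and "x \<in> I" "y \<in> I" "x + y \<in> I"
    and "0 \<le> x" "x \<le> y" "0 \<le> \<Phi> y"
  shows "\<Phi> (x + y) \<le> \<Phi> x + (2 ^ n - 1) * \<Phi> y"
proof (cases "y = 0")
  case True
  with assms show ?thesis by simp
next
  case False
  then have "0 < y" using assms by linarith
  then have coeff: "((x + y) ^ n - x ^ n) / y ^ n \<le> 2 ^ n - 1"
    using power_add_diff_le[OF \<open>0 \<le> x\<close> \<open>x \<le> y\<close>] by (simp add: divide_le_eq)
  have "\<Phi> (x + y) \<le> \<Phi> x + ((x + y) ^ n - x ^ n) / y ^ n * \<Phi> y"
    using assms(1-4) \<open>0 < y\<close> unfolding subadditive_order_def by blast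
  also have "\<dots> \<le> \<Phi> x + (2 ^ n - 1) * \<Phi> y"
    using mult_right_mono[OF coeff \<open>0 \<le> \<Phi> y\<close>] by simp
  finally show ?thesis .
qed

theorem proposition2p5:
  fixes I :: "real set" and n :: nat and \<Phi> :: "real \<Rightarrow> real"
  assumes "is_interval I" and "I \<subseteq> {0..}"
    and "\<exists>a\<in>I. \<exists>b\<in>I. a \<noteq> b"
    and "\<forall>x\<in>I. \<Phi> x \<ge> 0"
    and "subadditive_order n I \<Phi>"
    and "x \<in> I" and "y \<in> I" and "x + y \<in> I"
  shows "\<Phi> (x + y) \<le> max (\<Phi> x + (2 ^ n - 1) * \<Phi> y) ((2 ^ n - 1) * \<Phi> x + \<Phi> y)"
proof -
  have "0 \<le> x" "0 \<le> y" "0 \<le> \<Phi> x" "0 \<le> \<Phi> y" using assms(2,4,6,7) by auto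
  show ?thesis
  proof (cases "x \<le> y")
    case True
    then have "\<Phi> (x + y) \<le> \<Phi> x + (2 ^ n - 1) * \<Phi> y"
      using subadditive_order_le_larger assms(5-8) \<open>0 \<le> x\<close> \<open>0 \<le> \<Phi> y\<close> by blast
    then show ?thesis by simp
  next
    case False
    then have "\<Phi> (y + x) \<le> \<Phi> y + (2 ^ n - 1) * \<Phi> x"
      using subadditive_order_le_larger[of n I \<Phi> y x] assms(5-8) \<open>0 \<le> y\<close> \<open>0 \<le> \<Phi> x\<close>
      by (simp add: add.commute)
    then show ?thesis by (simp add: add.commute)
  qed
qed

end
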